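(* Fix $\kappa>0$ and $0<L<U<\infty$; let $a=(1+U)^{-1}$, $b=(1+L)^{-1}$, $I=[a,b]$, $z_0=(a+b)/2$, $\Delta=(b-a)/2$. For a measurable $\psi:[0,\infty)\to\mathbb R$ with $\|\psi\|_\infty\le1$, let $T_\psi(z)=\int_0^\infty\psi(\theta)\frac{\theta^{\kappa-1}}{\Gamma(\kappa)}\left(\frac{1-z}{z}\right)^\kappa e^{-\theta(1-z)/z}d\theta$ for $z\in I$, $R_\psi(z)=(1-z)^{-\kappa}T_\psi(z)$, and $q_\psi(u)=R_\psi(z_0+\Delta u)$ for $u\in[-1,1]$. Then for every integer $r\ge0$, $$\sup_{u\in[-1,1]}|q_\psi^{(r)}(u)|\le a^{-\kappa}L^{-\kappa}A^r\frac{\Gamma(r+\kappa)}{\Gamma(\kappa)},$$ where $A=\Delta a^{-1}\big(1+1/(aL)\big)>0$.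
   Context: $q_\psi^{(r)}$ denotes the $r$-th derivative; $\|\psi\|_\infty$ is the supremum norm. *)

theory Defs
  imports "HOL-Analysis.Analysis"
begin

definition T_psi :: "real \<Rightarrow> (real \<Rightarrow> real) \<Rightarrow> real \<Rightarrow> real" where
  "T_psi \<kappa> \<psi> z =
     (LINT \<theta>:{0..}|lborel. \<psi> \<theta> * (\<theta> powr (\<kappa> - 1) / Gamma \<kappa>)
        * ((1 - z) / z) powr \<kappa> * exp (- \<theta> * (1 - z) / z))"

definition R_psi :: "real \<Rightarrow> (real \<Rightarrow> real) \<Rightarrow> real \<Rightarrow> real" where
  "R_psi \<kappa> \<psi> z = (1 - z) powr (- \<kappa>) * T_psi \<kappa> \<psi> z"

definition q_psi :: "real \<Rightarrow> real \<Rightarrow> real \<Rightarrow> (real \<Rightarrow> real) \<Rightarrow> real \<Rightarrow> real" where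
  "q_psi \<kappa> L U \<psi> u =
     (let a = 1 / (1 + U); b = 1 / (1 + L); z0 = (a + b) / 2; \<Delta> = (b - a) / 2
      in R_psi \<kappa> \<psi> (z0 + \<Delta> * u))"

end

theory Submission
  imports Defs
begin

text \<open>With \<open>s = (1 - z) / z\<close> one has \<open>R_psi z = z\<^bsup>-\<kappa>\<^esup> J\<^sub>0(z) / \<Gamma>(\<kappa>)\<close> for the moments
  \<open>J\<^sub>m(z) = \<integral>\<^sub>0\<^sup>\<infinity> \<psi>(\<theta>) \<theta>\<^bsup>\<kappa>+m-1\<^esup> exp (-s\<theta>) d\<theta>\<close>, and differentiation under the integral sign
  gives \<open>J\<^sub>m' = J\<^sub>m\<^sub>+\<^sub>1 / z\<^sup>2\<close>. Hence the \<open>r\<close>-th derivative of \<open>R_psi\<close> is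
  \<open>\<Sum>m\<le>r. (-1)\<^bsup>r+m\<^esup> (\<kappa>)\<^sub>r (r choose m) / \<Gamma>(\<kappa>+m) z\<^bsup>-\<kappa>-r-m\<^esup> J\<^sub>m(z)\<close>.
  Since \<open>|\<psi>| \<le> 1\<close>, \<open>|J\<^sub>m(z)| \<le> \<Gamma>(\<kappa>+m) s\<^bsup>-\<kappa>-m\<^esup>\<close>, and the binomial theorem collapses the
  resulting bound to \<open>(\<kappa>)\<^sub>r (1-z)\<^bsup>-\<kappa>\<^esup> ((1 + 1/(1-z)) / z)\<^sup>r\<close>. On \<open>[a, b]\<close> we have
  \<open>z \<ge> a\<close> and \<open>1 - z \<ge> a L\<close>, and the affine change of variables contributes \<open>\<Delta>\<^sup>r\<close>.\<close>

lemma Gamma_integral_scaled_real: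
  fixes p c :: real
  assumes p: "p > 0" and c: "c > 0"
  shows "set_integrable lborel {0..} (\<lambda>t. t powr (p - 1) * exp (- c * t))"
    and "(LINT t:{0..}|lborel. t powr (p - 1) * exp (- c * t)) = Gamma p * c powr (- p)"
proof -
  define f where "f t = indicator {0..} t *\<^sub>R (t powr (p - 1) / exp t)" for t :: real
  have Gamma_hk: "((\<lambda>t. t powr (p - 1) / exp t) has_integral Gamma p) {0..}"
    by (rule Gamma_integral_real[OF p])
  then have "set_integrable lebesgue {0..} (\<lambda>t. t powr (p - 1) / exp t)"
    by (intro nonnegative_absolutely_integrable_1) auto
  then have Gamma_int: "set_integrable lborel {0..} (\<lambda>t. t powr (p - 1) / exp t)"
    unfolding set_integrable_def by (subst (asm) integrable_completion) auto
  then have f_int: "integrable lborel f"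
    unfolding f_def set_integrable_def .
  have "(LINT t:{0..}|lborel. t powr (p - 1) / exp t) = Gamma p"
    using set_borel_integral_eq_integral(2)[OF Gamma_int] Gamma_hk by (simp add: integral_unique)
  then have f_integral: "integral\<^sup>L lborel f = Gamma p"
    unfolding f_def set_lebesgue_integral_def .
  have f_scaled: "f (c * t) = c powr (p - 1) * (indicator {0..} t * (t powr (p - 1) * exp (- c * t)))" for t
    using c by (cases "t \<ge> 0") (auto simp: f_def powr_mult exp_minus field_simps indicator_def zero_le_mult_iff)
  have "integrable lborel (\<lambda>t. f (0 + c * t))"
    using c by (intro lborel_integrable_real_affine[OF f_int]) auto
  then show "set_integrable lborel {0..} (\<lambda>t. t powr (p - 1) * exp (- c * t))"
    using c unfolding add_0 f_scaled by (simp add: set_integrable_def)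
  have "Gamma p = c * (\<integral>t. f (c * t) \<partial>lborel)"
    using f_integral lborel_integral_real_affine[of c f 0] c by simp
  also have "\<dots> = c * c powr (p - 1) * (LINT t:{0..}|lborel. t powr (p - 1) * exp (- c * t))"
    by (simp add: f_scaled set_lebesgue_integral_def)
  also have "c * c powr (p - 1) = c powr p"
    using c by (simp add: powr_diff)
  finally show "(LINT t:{0..}|lborel. t powr (p - 1) * exp (- c * t)) = Gamma p * c powr (- p)"
    using c by (simp add: powr_minus field_simps)
qed

lemma has_real_derivative_integral_dominated:
  fixes f f' :: "real \<Rightarrow> 'a \<Rightarrow> real" and w :: "'a \<Rightarrow> real"
  assumes "\<delta> > 0"
    and int: "\<And>x. x \<in> ball x0 \<delta> \<Longrightarrow> integrable M (f x)"
    and der: "\<And>x \<theta>. x \<in> ball x0 \<delta> \<Longrightarrow> \<theta> \<in> space M \<Longrightarrow> ((\<lambda>x. f x \<theta>) has_real_derivative f' x \<theta>) (at x)"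
    and bound: "\<And>x \<theta>. x \<in> ball x0 \<delta> \<Longrightarrow> \<theta> \<in> space M \<Longrightarrow> \<bar>f' x \<theta>\<bar> \<le> w \<theta>"
    and "integrable M w"
    and "f' x0 \<in> borel_measurable M"
  shows "((\<lambda>x. integral\<^sup>L M (f x)) has_real_derivative integral\<^sup>L M (f' x0)) (at x0)"
proof -
  define q where "q h = (\<lambda>\<theta>. (f (x0 + h) \<theta> - f x0 \<theta>) / h)" for h
  have x0: "x0 \<in> ball x0 \<delta>"
    using \<open>\<delta> > 0\<close> by simp
  have q_bound: "\<bar>q h \<theta>\<bar> \<le> w \<theta>" if "x0 + h \<in> ball x0 \<delta>" "\<theta> \<in> space M" for h \<theta>
  proof -
    have "norm (f (x0 + h) \<theta> - f x0 \<theta>) \<le> w \<theta> * norm (x0 + h - x0)"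
      using that x0 der bound
      by (intro field_differentiable_bound[where S="ball x0 \<delta>" and f'="\<lambda>x. f' x \<theta>"])
         (auto intro: has_field_derivative_at_within)
    moreover have "0 \<le> w \<theta>"
      using bound[OF x0 that(2)] by linarith
    ultimately show ?thesis
      by (cases "h = 0") (simp_all add: q_def abs_divide divide_le_eq)
  qed
  have q_lim: "((\<lambda>h. q h \<theta>) \<longlongrightarrow> f' x0 \<theta>) (at 0)" if "\<theta> \<in> space M" for \<theta>
    using der[OF x0 that] by (simp add: DERIV_def q_def)
  have "((\<lambda>h. integral\<^sup>L M (q h)) \<longlongrightarrow> integral\<^sup>L M (f' x0)) (at 0)"
    unfolding tendsto_at_iff_sequentially o_def
  proof (intro allI impI)
    fix X :: "nat \<Rightarrow> real" assume X: "\<forall>n. X n \<in> UNIV - {0}" "X \<longlonglongrightarrow> 0"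
    then obtain N where N: "\<And>n. n \<ge> N \<Longrightarrow> x0 + X n \<in> ball x0 \<delta>"
      using \<open>\<delta> > 0\<close> by (force simp: LIMSEQ_iff dist_norm)
    have "(\<lambda>n. integral\<^sup>L M (q (X (n + N)))) \<longlonglongrightarrow> integral\<^sup>L M (f' x0)"
    proof (rule integral_dominated_convergence[where w=w])
      show "q (X (n + N)) \<in> borel_measurable M" for n
        using int[OF N[of "n + N"]] int[OF x0] unfolding q_def
        by (intro borel_measurable_divide borel_measurable_diff borel_measurable_const)
           (auto dest: borel_measurable_integrable)
      show "AE \<theta> in M. (\<lambda>n. q (X (n + N)) \<theta>) \<longlonglongrightarrow> f' x0 \<theta>"
        using X LIMSEQ_ignore_initial_segment[OF X(2), of N]
        by (intro AE_I2 q_lim[unfolded tendsto_at_iff_sequentially o_def, rule_format]) auto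
      show "AE \<theta> in M. norm (q (X (n + N)) \<theta>) \<le> w \<theta>" for n
        using q_bound N[of "n + N"] by (intro AE_I2) simp
    qed fact+
    then show "(\<lambda>n. integral\<^sup>L M (q (X n))) \<longlonglongrightarrow> integral\<^sup>L M (f' x0)"
      by (rule LIMSEQ_offset)
  qed
  moreover have "\<forall>\<^sub>F h in at 0. integral\<^sup>L M (q h) = (integral\<^sup>L M (f (x0 + h)) - integral\<^sup>L M (f x0)) / h"
    using \<open>\<delta> > 0\<close> int int[OF x0] by (auto simp: eventually_at dist_norm q_def intro!: exI[of _ \<delta>])
  ultimately show ?thesis
    unfolding DERIV_def by (rule Lim_transform_eventually)
qed

lemma has_real_derivative_set_integral_dominated:
  fixes f f' :: "real \<Rightarrow> 'a \<Rightarrow> real" and w :: "'a \<Rightarrow> real"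
  assumes "\<delta> > 0"
    and int: "\<And>x. x \<in> ball x0 \<delta> \<Longrightarrow> set_integrable M A (f x)"
    and der: "\<And>x \<theta>. x \<in> ball x0 \<delta> \<Longrightarrow> \<theta> \<in> A \<Longrightarrow> ((\<lambda>x. f x \<theta>) has_real_derivative f' x \<theta>) (at x)"
    and bound: "\<And>x \<theta>. x \<in> ball x0 \<delta> \<Longrightarrow> \<theta> \<in> A \<Longrightarrow> \<bar>f' x \<theta>\<bar> \<le> w \<theta>"
    and "set_integrable M A w"
    and "set_borel_measurable M A (f' x0)"
  shows "((\<lambda>x. LINT \<theta>:A|M. f x \<theta>) has_real_derivative (LINT \<theta>:A|M. f' x0 \<theta>)) (at x0)"
  unfolding set_lebesgue_integral_def
proof (rule has_real_derivative_integral_dominated[where w="\<lambda>\<theta>. indicator A \<theta> * w \<theta>"])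
  show "((\<lambda>x. indicator A \<theta> *\<^sub>R f x \<theta>) has_real_derivative indicator A \<theta> *\<^sub>R f' x \<theta>) (at x)"
    if "x \<in> ball x0 \<delta>" for x \<theta>
    using der[OF that] by (cases "\<theta> \<in> A") auto
qed (use assms in \<open>auto simp: set_integrable_def set_borel_measurable_def indicator_def\<close>)

lemma higher_deriv_eqI:
  fixes f :: "real \<Rightarrow> real" and F :: "nat \<Rightarrow> real \<Rightarrow> real"
  assumes "open S"
    and "\<And>x. x \<in> S \<Longrightarrow> f x = F 0 x"
    and "\<And>n x. x \<in> S \<Longrightarrow> (F n has_real_derivative F (Suc n) x) (at x)"
    and "x \<in> S"
  shows "(deriv ^^ n) f x = F n x"
  using \<open>x \<in> S\<close>
proof (induction n arbitrary: x)
  case 0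
  then show ?case using assms(2) by simp
next
  case (Suc n)
  have "((deriv ^^ n) f has_real_derivative F (Suc n) x) (at x)"
    using Suc.IH by (intro has_field_derivative_transform_within_open[OF assms(3) \<open>open S\<close>, of x])
      (auto simp: Suc.prems)
  then show ?case
    by (simp add: DERIV_imp_deriv)
qed

lemma higher_deriv_compose_affine:
  fixes f :: "real \<Rightarrow> real" and F :: "nat \<Rightarrow> real \<Rightarrow> real"
  assumes "open S"
    and "\<And>z. z \<in> S \<Longrightarrow> f z = F 0 z"
    and "\<And>n z. z \<in> S \<Longrightarrow> (F n has_real_derivative F (Suc n) z) (at z)"
    and "c + d * x \<in> S"
  shows "(deriv ^^ n) (\<lambda>x. f (c + d * x)) x = d ^ n * F n (c + d * x)"
proof (rule higher_deriv_eqI[where S="(\<lambda>x. c + d * x) -` S"])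
  show "open ((\<lambda>x. c + d * x) -` S)"
    using \<open>open S\<close> by (intro continuous_open_vimage continuous_intros)
  show "((\<lambda>x. d ^ n * F n (c + d * x)) has_real_derivative d ^ Suc n * F (Suc n) (c + d * x)) (at x)"
    if "x \<in> (\<lambda>x. c + d * x) -` S" for n x
  proof -
    have "((\<lambda>x. c + d * x) has_real_derivative d) (at x)"
      by (auto intro!: derivative_eq_intros)
    from DERIV_chain2[OF assms(3) this] that
    have "((\<lambda>x. F n (c + d * x)) has_real_derivative F (Suc n) (c + d * x) * d) (at x)"
      by simp
    then show ?thesis
      by (auto intro!: derivative_eq_intros simp: algebra_simps)
  qed
qed (use assms in auto)

definition R_psi_deriv_coeff :: "real \<Rightarrow> nat \<Rightarrow> nat \<Rightarrow> real" where
  "R_psi_deriv_coeff \<kappa> r m = (-1) ^ (r + m) * pochhammer \<kappa> r * real (r choose m) / Gamma (\<kappa> + real m)"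

lemma R_psi_deriv_coeff_eq_0: "r < m \<Longrightarrow> R_psi_deriv_coeff \<kappa> r m = 0"
  by (simp add: R_psi_deriv_coeff_def)

lemma abs_R_psi_deriv_coeff:
  "\<kappa> > 0 \<Longrightarrow> \<bar>R_psi_deriv_coeff \<kappa> r m\<bar> = pochhammer \<kappa> r * real (r choose m) / Gamma (\<kappa> + real m)"
  by (simp add: R_psi_deriv_coeff_def abs_mult pochhammer_nonneg)

lemma R_psi_deriv_coeff_Suc:
  assumes "\<kappa> > 0"
  shows "R_psi_deriv_coeff \<kappa> (Suc r) m =
    - (\<kappa> + real r + real m) * R_psi_deriv_coeff \<kappa> r m + (if m = 0 then 0 else R_psi_deriv_coeff \<kappa> r (m - 1))"
proof (cases m)
  case 0
  then show ?thesis
    by (simp add: R_psi_deriv_coeff_def pochhammer_Suc algebra_simps)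
next
  case (Suc j)
  define c0 c1 where "c0 = real (r choose j)" and "c1 = real (r choose Suc j)"
  define s G where "s = (-1) ^ (r + j) * pochhammer \<kappa> r" and "G = Gamma (\<kappa> + real (Suc j))"
  have "\<kappa> + real j > 0" "G > 0"
    using assms by (simp_all add: G_def)
  have "Gamma (\<kappa> + real j + 1) = (\<kappa> + real j) * Gamma (\<kappa> + real j)"
    using assms by (intro Gamma_plus1) (auto dest: nonpos_Ints_nonpos)
  then have Gamma_j: "Gamma (\<kappa> + real j) = G / (\<kappa> + real j)"
    using \<open>\<kappa> + real j > 0\<close> by (simp add: G_def field_simps)
  have "real r * c0 = real j * c0 + real (Suc j) * c1"
    using gbinomial_mult_1[of "real r" j] by (simp add: c0_def c1_def binomial_gbinomial)
  then have "(\<kappa> + real r) * (c0 + c1) = (\<kappa> + real r + real (Suc j)) * c1 + (\<kappa> + real j) * c0"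
    by (simp add: algebra_simps)
  moreover have "R_psi_deriv_coeff \<kappa> (Suc r) m = s * ((\<kappa> + real r) * (c0 + c1)) / G"
    unfolding Suc R_psi_deriv_coeff_def G_def[symmetric]
    by (simp add: pochhammer_Suc s_def c0_def c1_def algebra_simps)
  moreover have "- (\<kappa> + real r + real m) * R_psi_deriv_coeff \<kappa> r m + R_psi_deriv_coeff \<kappa> r (m - 1)
      = s * ((\<kappa> + real r + real (Suc j)) * c1 + (\<kappa> + real j) * c0) / G"
    using \<open>\<kappa> + real j > 0\<close> \<open>G > 0\<close>
    unfolding Suc R_psi_deriv_coeff_def diff_Suc_1 G_def[symmetric] Gamma_j
    by (simp add: s_def c0_def c1_def field_simps)
  ultimately show ?thesis
    by (simp add: Suc)
qed

locale gamma_mixture =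
  fixes \<kappa> :: real and \<psi> :: "real \<Rightarrow> real"
  assumes kappa_pos: "\<kappa> > 0"
    and psi_measurable: "set_borel_measurable lborel {0..} \<psi>"
    and psi_bounded: "\<And>\<theta>. \<theta> \<ge> 0 \<Longrightarrow> \<bar>\<psi> \<theta>\<bar> \<le> 1"
begin

definition moment_integrand :: "nat \<Rightarrow> real \<Rightarrow> real \<Rightarrow> real" where
  "moment_integrand m z \<theta> = \<psi> \<theta> * \<theta> powr (\<kappa> - 1) * \<theta> ^ m * exp (- \<theta> * (1 - z) / z)"

definition moment :: "nat \<Rightarrow> real \<Rightarrow> real" where
  "moment m z = (LINT \<theta>:{0..}|lborel. moment_integrand m z \<theta>)"

lemma set_borel_measurable_moment_integrand:
  "set_borel_measurable lborel {0..} (moment_integrand m z)"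
proof -
  have "(\<lambda>\<theta>. indicator {0..} \<theta> *\<^sub>R \<psi> \<theta> * (\<theta> powr (\<kappa> - 1) * \<theta> ^ m * exp (- \<theta> * (1 - z) / z)))
      \<in> borel_measurable lborel"
    using psi_measurable unfolding set_borel_measurable_def by measurable
  then show ?thesis
    by (simp add: set_borel_measurable_def moment_integrand_def mult.assoc)
qed

lemma abs_moment_integrand_le:
  assumes "\<theta> \<ge> 0"
  shows "\<bar>moment_integrand m z \<theta>\<bar> \<le> \<theta> powr (\<kappa> + real m - 1) * exp (- ((1 - z) / z) * \<theta>)"
proof -
  have "\<theta> powr (\<kappa> - 1) * \<theta> ^ m = \<theta> powr (\<kappa> + real m - 1)"
    using assms by (cases "\<theta> = 0") (auto simp: powr_realpow[symmetric] powr_add[symmetric] algebra_simps)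
  then have "\<bar>moment_integrand m z \<theta>\<bar> = \<bar>\<psi> \<theta>\<bar> * (\<theta> powr (\<kappa> + real m - 1) * exp (- ((1 - z) / z) * \<theta>))"
    by (simp add: moment_integrand_def abs_mult mult.assoc)
  also have "\<dots> \<le> \<theta> powr (\<kappa> + real m - 1) * exp (- ((1 - z) / z) * \<theta>)"
    using psi_bounded[OF assms] by (intro mult_left_le_one_le) auto
  finally show ?thesis .
qed

lemma
  assumes "0 < z" "z < 1"
  shows set_integrable_moment_integrand: "set_integrable lborel {0..} (moment_integrand m z)"
    and abs_moment_le: "\<bar>moment m z\<bar> \<le> Gamma (\<kappa> + real m) * ((1 - z) / z) powr (- (\<kappa> + real m))"
proof -
  have s: "(1 - z) / z > 0" and p: "\<kappa> + real m > 0"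
    using assms kappa_pos by simp_all
  note Gamma = Gamma_integral_scaled_real[OF p s]
  show int: "set_integrable lborel {0..} (moment_integrand m z)"
    using set_borel_measurable_moment_integrand abs_moment_integrand_le
    by (intro set_integrable_bound[OF Gamma(1)]) (auto intro!: AE_I2)
  have "\<bar>moment m z\<bar> \<le> (LINT \<theta>:{0..}|lborel. \<bar>moment_integrand m z \<theta>\<bar>)"
    unfolding moment_def using set_integral_norm_bound[OF int] by simp
  also have "\<dots> \<le> (LINT \<theta>:{0..}|lborel. \<theta> powr (\<kappa> + real m - 1) * exp (- ((1 - z) / z) * \<theta>))"
    using abs_moment_integrand_le set_integrable_abs[OF int] Gamma(1) by (intro set_integral_mono) auto
  finally show "\<bar>moment m z\<bar> \<le> Gamma (\<kappa> + real m) * ((1 - z) / z) powr (- (\<kappa> + real m))"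
    by (simp only: Gamma(2))
qed

lemma has_real_derivative_moment_integrand:
  assumes "x \<noteq> 0"
  shows "((\<lambda>x. moment_integrand m x \<theta>) has_real_derivative moment_integrand (Suc m) x \<theta> / x\<^sup>2) (at x)"
  unfolding moment_integrand_def using assms
  by (auto intro!: derivative_eq_intros simp: field_simps power2_eq_square)

lemma abs_moment_integrand_Suc_div_le:
  assumes "0 < z" "z / 2 < x" "x < (1 + z) / 2" "\<theta> \<ge> 0"
  shows "\<bar>moment_integrand (Suc m) x \<theta> / x\<^sup>2\<bar>
    \<le> 4 / z\<^sup>2 * (\<theta> powr (\<kappa> + real (Suc m) - 1) * exp (- ((1 - z) / (1 + z)) * \<theta>))"
proof -
  have "(1 - z) / (1 + z) * \<theta> \<le> (1 - x) / x * \<theta>"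
    using assms by (intro mult_right_mono) (simp_all add: field_simps)
  then have "\<theta> powr (\<kappa> + real (Suc m) - 1) * exp (- ((1 - x) / x) * \<theta>)
      \<le> \<theta> powr (\<kappa> + real (Suc m) - 1) * exp (- ((1 - z) / (1 + z)) * \<theta>)"
    by (intro mult_left_mono) simp_all
  with assms have "\<bar>moment_integrand (Suc m) x \<theta>\<bar>
      \<le> \<theta> powr (\<kappa> + real (Suc m) - 1) * exp (- ((1 - z) / (1 + z)) * \<theta>)"
    by (intro order_trans[OF abs_moment_integrand_le]) auto
  moreover have "z * z \<le> (2 * x) * (2 * x)"
    using assms by (intro mult_mono) auto
  then have "1 / x\<^sup>2 \<le> 4 / z\<^sup>2"
    using assms by (simp add: field_simps power2_eq_square)
  ultimately have "\<bar>moment_integrand (Suc m) x \<theta>\<bar> * (1 / x\<^sup>2)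
      \<le> \<theta> powr (\<kappa> + real (Suc m) - 1) * exp (- ((1 - z) / (1 + z)) * \<theta>) * (4 / z\<^sup>2)"
    by (intro mult_mono) auto
  then show ?thesis
    by (simp add: abs_divide mult.commute)
qed

lemma has_real_derivative_moment:
  assumes "0 < z" "z < 1"
  shows "(moment m has_real_derivative moment (Suc m) z / z\<^sup>2) (at z)"
proof -
  define \<delta> where "\<delta> = min z (1 - z) / 2"
  define w where "w \<theta> = 4 / z\<^sup>2 * (\<theta> powr (\<kappa> + real (Suc m) - 1) * exp (- ((1 - z) / (1 + z)) * \<theta>))"
    for \<theta>
  have "\<delta> > 0"
    using assms by (simp add: \<delta>_def)
  have near_z: "z / 2 < x" "x < (1 + z) / 2" if "x \<in> ball z \<delta>" for x
    using that by (auto simp: \<delta>_def dist_real_def abs_if split: if_splits)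
  have "((\<lambda>x. LINT \<theta>:{0..}|lborel. moment_integrand m x \<theta>) has_real_derivative
      (LINT \<theta>:{0..}|lborel. moment_integrand (Suc m) z \<theta> / z\<^sup>2)) (at z)"
  proof (rule has_real_derivative_set_integral_dominated[OF \<open>\<delta> > 0\<close>, where w=w])
    show "set_integrable lborel {0..} (moment_integrand m x)" if "x \<in> ball z \<delta>" for x
      using near_z[OF that] assms by (intro set_integrable_moment_integrand) auto
    show "((\<lambda>x. moment_integrand m x \<theta>) has_real_derivative moment_integrand (Suc m) x \<theta> / x\<^sup>2) (at x)"
      if "x \<in> ball z \<delta>" for x \<theta>
      using near_z[OF that] assms by (intro has_real_derivative_moment_integrand) auto
    show "\<bar>moment_integrand (Suc m) x \<theta> / x\<^sup>2\<bar> \<le> w \<theta>" if "x \<in> ball z \<delta>" "\<theta> \<in> {0..}" for x \<theta>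
      using near_z[OF that(1)] that(2) assms unfolding w_def
      by (intro abs_moment_integrand_Suc_div_le) auto
    show "set_integrable lborel {0..} w"
      using Gamma_integral_scaled_real(1)[of "\<kappa> + real (Suc m)" "(1 - z) / (1 + z)"] kappa_pos assms
      by (simp add: w_def[abs_def])
    show "set_borel_measurable lborel {0..} (\<lambda>\<theta>. moment_integrand (Suc m) z \<theta> / z\<^sup>2)"
      using set_borel_measurable_moment_integrand
      by (simp add: set_borel_measurable_def borel_measurable_divide)
  qed
  then show ?thesis
    by (simp add: moment_def[abs_def])
qed

definition moment_term :: "nat \<Rightarrow> nat \<Rightarrow> real \<Rightarrow> real" where
  "moment_term r m z = z powr (- \<kappa> - real r - real m) * moment m z"

definition R_psi_deriv :: "nat \<Rightarrow> real \<Rightarrow> real" where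
  "R_psi_deriv r z = (\<Sum>m\<le>r. R_psi_deriv_coeff \<kappa> r m * moment_term r m z)"

lemma R_psi_eq_R_psi_deriv_0:
  assumes "0 < z" "z < 1"
  shows "R_psi \<kappa> \<psi> z = R_psi_deriv 0 z"
proof -
  have "T_psi \<kappa> \<psi> z = (LINT \<theta>:{0..}|lborel. ((1 - z) / z) powr \<kappa> / Gamma \<kappa> * moment_integrand 0 z \<theta>)"
    unfolding T_psi_def moment_integrand_def by (simp add: ac_simps)
  then have "T_psi \<kappa> \<psi> z = ((1 - z) / z) powr \<kappa> / Gamma \<kappa> * moment 0 z"
    unfolding moment_def by simp
  moreover have "(1 - z) powr (- \<kappa>) * ((1 - z) / z) powr \<kappa> = z powr (- \<kappa>)"
    using assms by (simp add: powr_divide powr_minus field_simps)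
  ultimately show ?thesis
    by (simp add: R_psi_def R_psi_deriv_def R_psi_deriv_coeff_def moment_term_def)
qed

lemma has_real_derivative_moment_term:
  assumes "0 < z" "z < 1"
  shows "(moment_term r m has_real_derivative
    - (\<kappa> + real r + real m) * moment_term (Suc r) m z + moment_term (Suc r) (Suc m) z) (at z)"
proof -
  have "z\<^sup>2 = z powr 2"
    using assms by (simp add: powr_numeral)
  then have "z powr (- \<kappa> - real r - real m) / z\<^sup>2 = z powr (- \<kappa> - real r - real m - 2)"
    by (simp add: powr_diff)
  also have "- \<kappa> - real r - real m - 2 = - \<kappa> - real (Suc r) - real (Suc m)"
    by simp
  finally have shift2: "z powr (- \<kappa> - real r - real m) / z\<^sup>2 = z powr (- \<kappa> - real (Suc r) - real (Suc m))" .
  have shift1: "z powr (- \<kappa> - real r - real m - 1) = z powr (- \<kappa> - real (Suc r) - real m)"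
    by (simp add: algebra_simps)
  have "((\<lambda>z. z powr (- \<kappa> - real r - real m)) has_real_derivative
      (- \<kappa> - real r - real m) * z powr (- \<kappa> - real r - real m - 1)) (at z)"
    using assms by (auto intro!: derivative_eq_intros)
  from DERIV_mult[OF this has_real_derivative_moment[OF assms, of m]]
  show ?thesis
    unfolding moment_term_def[abs_def] shift1[symmetric] shift2[symmetric]
    by (rule DERIV_cong) (simp add: algebra_simps)
qed

lemma has_real_derivative_R_psi_deriv:
  assumes "0 < z" "z < 1"
  shows "(R_psi_deriv r has_real_derivative R_psi_deriv (Suc r) z) (at z)"
proof -
  define c where "c = R_psi_deriv_coeff \<kappa>"
  define Q where "Q m = moment_term (Suc r) m z" for m
  have "(R_psi_deriv r has_real_derivative
      (\<Sum>m\<le>r. c r m * (- (\<kappa> + real r + real m) * Q m + Q (Suc m)))) (at z)"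
    unfolding R_psi_deriv_def[abs_def] c_def Q_def
    by (intro DERIV_sum DERIV_cmult has_real_derivative_moment_term assms)
  moreover have "(\<Sum>m\<le>r. c r m * (- (\<kappa> + real r + real m) * Q m + Q (Suc m))) = R_psi_deriv (Suc r) z"
  proof -
    have "R_psi_deriv (Suc r) z = (\<Sum>m\<le>Suc r. - (\<kappa> + real r + real m) * c r m * Q m)
        + (\<Sum>m\<le>Suc r. (if m = 0 then 0 else c r (m - 1)) * Q m)"
      unfolding R_psi_deriv_def c_def Q_def R_psi_deriv_coeff_Suc[OF kappa_pos] sum.distrib[symmetric]
      by (simp add: algebra_simps)
    also have "(\<Sum>m\<le>Suc r. - (\<kappa> + real r + real m) * c r m * Q m)
        = (\<Sum>m\<le>r. - (\<kappa> + real r + real m) * c r m * Q m)"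
      by (simp add: c_def R_psi_deriv_coeff_eq_0)
    also have "(\<Sum>m\<le>Suc r. (if m = 0 then 0 else c r (m - 1)) * Q m) = (\<Sum>m\<le>r. c r m * Q (Suc m))"
      by (subst sum.atMost_Suc_shift) simp
    finally show ?thesis
      by (simp add: sum.distrib[symmetric] algebra_simps)
  qed
  ultimately show ?thesis
    by simp
qed

lemma abs_moment_term_le:
  assumes "0 < z" "z < 1"
  shows "\<bar>moment_term r m z\<bar> \<le> Gamma (\<kappa> + real m) * z powr (- real r) * (1 - z) powr (- \<kappa>) * (1 / (1 - z)) ^ m"
proof -
  have "z powr (- \<kappa> - real r - real m) * ((1 - z) / z) powr (- (\<kappa> + real m))
      = z powr (- \<kappa> - real r - real m) / z powr (- (\<kappa> + real m)) * (1 - z) powr (- (\<kappa> + real m))"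
    using assms by (simp add: powr_divide)
  also have "z powr (- \<kappa> - real r - real m) / z powr (- (\<kappa> + real m)) = z powr (- real r)"
    by (simp add: powr_diff[symmetric])
  also have "(1 - z) powr (- (\<kappa> + real m)) = (1 - z) powr (- \<kappa>) * (1 - z) powr (- real m)"
    by (simp add: powr_add[symmetric])
  also have "(1 - z) powr (- real m) = (1 / (1 - z)) ^ m"
    using assms by (simp add: powr_minus powr_realpow power_one_over inverse_eq_divide)
  finally have powr_eq: "z powr (- \<kappa> - real r - real m) * ((1 - z) / z) powr (- (\<kappa> + real m))
      = z powr (- real r) * (1 - z) powr (- \<kappa>) * (1 / (1 - z)) ^ m"
    by (simp only: mult.assoc)
  have "\<bar>moment_term r m z\<bar> = z powr (- \<kappa> - real r - real m) * \<bar>moment m z\<bar>"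
    by (simp add: moment_term_def abs_mult)
  also have "\<dots> \<le> z powr (- \<kappa> - real r - real m) * (Gamma (\<kappa> + real m) * ((1 - z) / z) powr (- (\<kappa> + real m)))"
    using abs_moment_le[OF assms] by (rule mult_left_mono) simp
  also have "\<dots> = Gamma (\<kappa> + real m) * z powr (- real r) * (1 - z) powr (- \<kappa>) * (1 / (1 - z)) ^ m"
    by (simp only: powr_eq mult.left_commute[of _ "Gamma _"] mult.assoc)
  finally show ?thesis .
qed

lemma abs_R_psi_deriv_le:
  assumes "0 < z" "z < 1"
  shows "\<bar>R_psi_deriv r z\<bar> \<le> pochhammer \<kappa> r * (1 - z) powr (- \<kappa>) * ((1 + 1 / (1 - z)) / z) ^ r"
proof -
  define K where "K = pochhammer \<kappa> r * z powr (- real r) * (1 - z) powr (- \<kappa>)"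
  have Gamma_pos: "Gamma (\<kappa> + real m) > 0" for m
    using kappa_pos by (intro Gamma_real_pos add_pos_nonneg) auto
  have "\<bar>R_psi_deriv r z\<bar> \<le> (\<Sum>m\<le>r. \<bar>R_psi_deriv_coeff \<kappa> r m\<bar> * \<bar>moment_term r m z\<bar>)"
    unfolding R_psi_deriv_def abs_mult[symmetric] by (rule sum_abs)
  also have "\<dots> \<le> (\<Sum>m\<le>r. pochhammer \<kappa> r * real (r choose m) / Gamma (\<kappa> + real m)
      * (Gamma (\<kappa> + real m) * z powr (- real r) * (1 - z) powr (- \<kappa>) * (1 / (1 - z)) ^ m))"
    unfolding abs_R_psi_deriv_coeff[OF kappa_pos]
    using abs_moment_term_le[OF assms] kappa_pos
    by (intro sum_mono mult_left_mono) (auto intro!: divide_nonneg_pos mult_nonneg_nonneg pochhammer_nonneg Gamma_pos)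
  also have "\<dots> = K * (\<Sum>m\<le>r. real (r choose m) * (1 / (1 - z)) ^ m * 1 ^ (r - m))"
    using Gamma_pos by (simp add: K_def sum_distrib_left less_imp_neq[symmetric] ac_simps)
  also have "\<dots> = K * (1 / (1 - z) + 1) ^ r"
    by (simp only: binomial_ring)
  also have "\<dots> = pochhammer \<kappa> r * (1 - z) powr (- \<kappa>) * ((1 + 1 / (1 - z)) / z) ^ r"
    using assms by (simp add: K_def powr_minus powr_realpow power_mult_distrib power_inverse divide_inverse add.commute)
  finally show ?thesis .
qed

lemma abs_R_psi_deriv_le_uniform:
  assumes "0 < a" "a \<le> z" "0 < c" "c \<le> 1 - z"
  shows "\<bar>R_psi_deriv r z\<bar> \<le> pochhammer \<kappa> r * c powr (- \<kappa>) * ((1 + 1 / c) / a) ^ r"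
proof -
  have z: "0 < z" "z < 1"
    using assms by auto
  have "(1 - z) powr (- \<kappa>) \<le> c powr (- \<kappa>)"
    using assms kappa_pos by (intro powr_mono2') auto
  moreover have "(1 + 1 / (1 - z)) / z \<le> (1 + 1 / c) / a"
    using assms z by (intro frac_le add_left_mono divide_left_mono) auto
  ultimately have "pochhammer \<kappa> r * (1 - z) powr (- \<kappa>) * ((1 + 1 / (1 - z)) / z) ^ r
      \<le> pochhammer \<kappa> r * c powr (- \<kappa>) * ((1 + 1 / c) / a) ^ r"
    using z kappa_pos by (intro mult_mono mult_left_mono power_mono) (auto intro!: mult_nonneg_nonneg pochhammer_nonneg)
  then show ?thesis
    by (rule order_trans[OF abs_R_psi_deriv_le[OF z]])
qed

lemma abs_higher_deriv_R_psi_rescaled_le: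
  assumes "0 < a" "a < b" "b < 1" "0 < c" "c \<le> 1 - b" "u \<in> {-1..1}"
  shows "\<bar>(deriv ^^ r) (\<lambda>u. R_psi \<kappa> \<psi> ((a + b) / 2 + (b - a) / 2 * u)) u\<bar>
    \<le> pochhammer \<kappa> r * c powr (- \<kappa>) * ((b - a) / 2 / a * (1 + 1 / c)) ^ r"
proof -
  define z where "z = (a + b) / 2 + (b - a) / 2 * u"
  have "z - a = (b - a) * (1 + u) / 2" "b - z = (b - a) * (1 - u) / 2"
    by (simp_all add: z_def field_simps)
  moreover have "(b - a) * (1 + u) \<ge> 0" "(b - a) * (1 - u) \<ge> 0"
    using assms by (auto intro!: mult_nonneg_nonneg)
  ultimately have z: "a \<le> z" "z \<le> b"
    by linarith+
  have "(deriv ^^ r) (\<lambda>u. R_psi \<kappa> \<psi> ((a + b) / 2 + (b - a) / 2 * u)) u = ((b - a) / 2) ^ r * R_psi_deriv r z"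
    unfolding z_def
    by (rule higher_deriv_compose_affine[where S="{0<..<1}"])
      (use R_psi_eq_R_psi_deriv_0 has_real_derivative_R_psi_deriv assms z in \<open>auto simp: z_def\<close>)
  then have "\<bar>(deriv ^^ r) (\<lambda>u. R_psi \<kappa> \<psi> ((a + b) / 2 + (b - a) / 2 * u)) u\<bar>
      = ((b - a) / 2) ^ r * \<bar>R_psi_deriv r z\<bar>"
    using assms by (simp add: abs_mult)
  also have "\<dots> \<le> ((b - a) / 2) ^ r * (pochhammer \<kappa> r * c powr (- \<kappa>) * ((1 + 1 / c) / a) ^ r)"
    using assms z by (intro mult_left_mono abs_R_psi_deriv_le_uniform) auto
  also have "\<dots> = pochhammer \<kappa> r * c powr (- \<kappa>) * ((b - a) / 2 / a * (1 + 1 / c)) ^ r"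
    by (simp add: power_mult_distrib[symmetric] ac_simps)
  finally show ?thesis .
qed

end

theorem lemmaD5:
  fixes \<kappa> L U :: real and \<psi> :: "real \<Rightarrow> real"
  assumes "\<kappa> > 0" and "0 < L" and "L < U"
    and "set_borel_measurable lborel {0..} \<psi>"
    and "\<forall>\<theta>\<ge>0. \<bar>\<psi> \<theta>\<bar> \<le> 1"
  shows "\<forall>r::nat. \<forall>u\<in>{-1..1::real}.
    (let a = 1 / (1 + U); b = 1 / (1 + L); \<Delta> = (b - a) / 2;
         A = \<Delta> / a * (1 + 1 / (a * L))
     in \<bar>(deriv ^^ r) (q_psi \<kappa> L U \<psi>) u\<bar>
          \<le> a powr (- \<kappa>) * L powr (- \<kappa>) * A ^ r * Gamma (real r + \<kappa>) / Gamma \<kappa>)"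
proof -
  interpret gamma_mixture \<kappa> \<psi>
    using assms by unfold_locales auto
  define a b where "a = 1 / (1 + U)" and "b = 1 / (1 + L)"
  have ab: "0 < a" "a < b" "b < 1"
    using assms by (auto simp: a_def b_def intro!: divide_strict_left_mono)
  have aL: "0 < a * L" "a * L \<le> 1 - b"
    using assms by (simp_all add: a_def b_def field_simps)
  have "q_psi \<kappa> L U \<psi> = (\<lambda>u. R_psi \<kappa> \<psi> ((a + b) / 2 + (b - a) / 2 * u))"
    unfolding q_psi_def[abs_def] Let_def a_def b_def ..
  moreover have "pochhammer \<kappa> r = Gamma (real r + \<kappa>) / Gamma \<kappa>" for r
    using assms by (subst pochhammer_Gamma) (auto simp: add.commute dest: nonpos_Ints_nonpos)
  ultimately show ?thesis
    using abs_higher_deriv_R_psi_rescaled_le[OF ab aL] ab assms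
    by (simp add: Let_def a_def[symmetric] b_def[symmetric] powr_mult ac_simps)
qed

end
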